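(* Let $(X,T)$ be a minimal Cantor system, $p\geq 1$ and $U\subseteq X$ clopen. Then for all $x,y\in X$, $$\mathrm{PS}_p(x,U)=\emptyset \iff \mathrm{PS}_p(y,U)=\emptyset .$$
   Context: A minimal Cantor system is a pair $(X,T)$ where $X$ is a Cantor space, $T:X\to X$ a homeomorphism, and every orbit $\{T^n x : n\in\mathbb Z\}$ is dense in $X$. For $x\in X$, a clopen $U\subseteq X$ and an integer $p\geq 1$, $\mathrm{PS}_p(x,U)=\{k\in\mathbb Z : T^{k+np}x\in U \text{ for all } n\in\mathbb Z\}$. *)

theory Defs
  imports "HOL-Analysis.Analysis"
begin

definition cantor_space :: "'a topology \<Rightarrow> bool" where
  "cantor_space X \<longleftrightarrow>
     X homeomorphic_space product_topology (\<lambda>_::nat. discrete_topology {0::nat, 1}) UNIV"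

definition zpow :: "'a topology \<Rightarrow> ('a \<Rightarrow> 'a) \<Rightarrow> int \<Rightarrow> 'a \<Rightarrow> 'a" where
  "zpow X T n = (if n \<ge> 0 then T ^^ nat n else (inv_into (topspace X) T) ^^ nat (- n))"

definition minimal_cantor_system :: "'a topology \<Rightarrow> ('a \<Rightarrow> 'a) \<Rightarrow> bool" where
  "minimal_cantor_system X T \<longleftrightarrow>
     cantor_space X \<and> homeomorphic_map X X T \<and>
     (\<forall>x \<in> topspace X. X closure_of {zpow X T n x | n. True} = topspace X)"

definition PS :: "'a topology \<Rightarrow> ('a \<Rightarrow> 'a) \<Rightarrow> nat \<Rightarrow> 'a \<Rightarrow> 'a set \<Rightarrow> int set" where
  "PS X T p x U = {k. \<forall>n::int. zpow X T (k + n * int p) x \<in> U}"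

end

theory Submission
  imports Defs
begin

text \<open>For a homeomorphism T the set of points z with \<open>PS\<^sub>p(z,U) \<noteq> {}\<close> is T-invariant,
  and it is closed when U is: since k may be reduced modulo p, the set is a finite union
  over residues j of countable intersections of the closed preimages of U under the
  iterates \<open>T\<^bsup>j+np\<^esup>\<close>. A closed set containing a point with dense orbit contains that
  orbit and hence all of X; under minimality the set is therefore empty or everything.\<close>

lemma homeomorphic_maps_inv_into:
  assumes "homeomorphic_map X Y f"
  shows "homeomorphic_maps X Y f (inv_into (topspace X) f)"
proof -
  have f: "continuous_map X Y f" "open_map X Y f"
    "f ` topspace X = topspace Y" "inj_on f (topspace X)"
    using assms by (auto simp: homeomorphic_eq_everything_map)
  have "continuous_map Y X (inv_into (topspace X) f)"
    using f open_eq_continuous_inverse_map[of X f Y "inv_into (topspace X) f"]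
    by (force simp: inv_into_into f_inv_into_f continuous_map_def)
  then show ?thesis
    using f by (auto simp: homeomorphic_maps_def f_inv_into_f)
qed

lemma continuous_map_funpow: "continuous_map X X f \<Longrightarrow> continuous_map X X (f ^^ n)"
  by (induction n) (auto intro: continuous_map_compose)

lemma continuous_map_zpow:
  assumes "homeomorphic_map X X T"
  shows "continuous_map X X (zpow X T n)"
  using homeomorphic_maps_inv_into[OF assms]
  by (auto simp: zpow_def homeomorphic_maps_def intro: continuous_map_funpow)

lemma zpow_in_topspace:
  assumes "homeomorphic_map X X T" "z \<in> topspace X"
  shows "zpow X T n z \<in> topspace X"
  using continuous_map_zpow[OF assms(1)] assms(2) by (auto simp: continuous_map_def)

lemma zpow_add_one:
  assumes T: "homeomorphic_map X X T" and z: "z \<in> topspace X"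
  shows "zpow X T (a + 1) z = T (zpow X T a z)"
proof (cases "a \<ge> 0")
  case True
  then have "nat (a + 1) = Suc (nat a)" by simp
  with True show ?thesis by (simp add: zpow_def)
next
  case False
  then have "nat (- a) = Suc (nat (- (a + 1)))" by simp
  with False have "zpow X T a z = inv_into (topspace X) T (zpow X T (a + 1) z)"
    by (simp add: zpow_def)
  then show ?thesis
    using homeomorphic_maps_inv_into[OF T] zpow_in_topspace[OF T z]
    by (simp add: homeomorphic_maps_def)
qed

lemma zpow_add:
  assumes T: "homeomorphic_map X X T" and z: "z \<in> topspace X"
  shows "zpow X T (a + b) z = zpow X T a (zpow X T b z)"
proof (induction a rule: int_induct[where k = 0])
  case base
  show ?case by (simp add: zpow_def)
next
  case (step1 i)
  have "zpow X T (i + 1 + b) z = T (zpow X T (i + b) z)"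
    using zpow_add_one[OF T z, of "i + b"] by (simp add: algebra_simps)
  also have "\<dots> = zpow X T (i + 1) (zpow X T b z)"
    using step1 zpow_add_one[OF T zpow_in_topspace[OF T z]] by simp
  finally show ?case .
next
  case (step2 i)
  have inj: "inj_on T (topspace X)"
    using T by (simp add: homeomorphic_eq_everything_map)
  have "T (zpow X T (i - 1 + b) z) = T (zpow X T (i - 1) (zpow X T b z))"
    using step2 zpow_add_one[OF T z, of "i - 1 + b"]
      zpow_add_one[OF T zpow_in_topspace[OF T z], of "i - 1"]
    by (simp add: algebra_simps)
  then show ?case
    using inj_onD[OF inj] zpow_in_topspace[OF T] z by blast
qed

lemma PS_add_period:
  assumes "k \<in> PS X T p z U"
  shows "k + m * int p \<in> PS X T p z U"
  unfolding PS_def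
proof (intro CollectI allI)
  fix n :: int
  have "zpow X T (k + (m + n) * int p) z \<in> U"
    using assms by (simp add: PS_def)
  moreover have "k + (m + n) * int p = k + m * int p + n * int p"
    by (simp add: algebra_simps)
  ultimately show "zpow X T (k + m * int p + n * int p) z \<in> U"
    by simp
qed

lemma PS_nonempty_iff_residue:
  assumes "p \<ge> 1"
  shows "PS X T p z U \<noteq> {} \<longleftrightarrow> (\<exists>j\<in>{0..<int p}. j \<in> PS X T p z U)"
proof
  assume "PS X T p z U \<noteq> {}"
  then obtain k where k: "k \<in> PS X T p z U" by blast
  have "k mod int p = k + (- (k div int p)) * int p"
    by (simp add: minus_div_mult_eq_mod[symmetric])
  then have "k mod int p \<in> PS X T p z U"
    using PS_add_period[OF k] by metis
  moreover have "k mod int p \<in> {0..<int p}" using assms by simp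
  ultimately show "\<exists>j\<in>{0..<int p}. j \<in> PS X T p z U" by blast
qed blast

lemma PS_zpow_iff:
  assumes "homeomorphic_map X X T" "z \<in> topspace X"
  shows "k \<in> PS X T p (zpow X T n z) U \<longleftrightarrow> k + n \<in> PS X T p z U"
proof -
  have "zpow X T (k + m * int p) (zpow X T n z) = zpow X T (k + n + m * int p) z" for m
    using zpow_add[OF assms, of "k + m * int p" n] by (simp add: algebra_simps)
  then show ?thesis by (simp add: PS_def)
qed

lemma closedin_PS_nonempty:
  assumes T: "homeomorphic_map X X T" and U: "closedin X U" and p: "p \<ge> 1"
  shows "closedin X {z \<in> topspace X. PS X T p z U \<noteq> {}}"
proof -
  have "PS X T p z U \<noteq> {} \<longleftrightarrow> (\<exists>j\<in>{0..<int p}. \<forall>n. zpow X T (j + n * int p) z \<in> U)" for z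
    unfolding PS_nonempty_iff_residue[OF p] by (simp add: PS_def)
  then have "{z \<in> topspace X. PS X T p z U \<noteq> {}} =
      {z \<in> topspace X. \<exists>j\<in>{0..<int p}. \<forall>n. zpow X T (j + n * int p) z \<in> U}"
    by simp
  also have "\<dots> =
      (\<Union>j\<in>{0..<int p}. \<Inter>n. {z \<in> topspace X. zpow X T (j + n * int p) z \<in> U})"
    by auto
  finally have B: "{z \<in> topspace X. PS X T p z U \<noteq> {}} = \<dots>" .
  have "closedin X {z \<in> topspace X. zpow X T m z \<in> U}" for m
    using closedin_continuous_map_preimage[OF continuous_map_zpow[OF T] U] .
  then show ?thesis
    unfolding B by (intro closedin_Union closedin_Inter) auto
qed

lemma PS_nonempty_of_dense_orbit:
  assumes T: "homeomorphic_map X X T" and U: "closedin X U" and p: "p \<ge> 1"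
    and dense: "X closure_of {zpow X T n x | n. True} = topspace X"
    and x: "x \<in> topspace X" and y: "y \<in> topspace X"
    and PS_x: "PS X T p x U \<noteq> {}"
  shows "PS X T p y U \<noteq> {}"
proof -
  let ?B = "{z \<in> topspace X. PS X T p z U \<noteq> {}}"
  obtain k where k: "k \<in> PS X T p x U" using PS_x by blast
  have "zpow X T n x \<in> ?B" for n
  proof -
    have "k - n \<in> PS X T p (zpow X T n x) U"
      using PS_zpow_iff[OF T x] k by simp
    then show ?thesis
      using zpow_in_topspace[OF T x] by blast
  qed
  then have "{zpow X T n x | n. True} \<subseteq> ?B"
    by blast
  then have "X closure_of {zpow X T n x | n. True} \<subseteq> ?B"
    by (rule closure_of_minimal) (rule closedin_PS_nonempty[OF T U p])
  then show ?thesis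
    using dense y by blast
qed

theorem mainTheorem2:
  fixes X :: "'a topology" and T :: "'a \<Rightarrow> 'a" and p :: nat and U :: "'a set"
  assumes "minimal_cantor_system X T"
    and "p \<ge> 1"
    and "closedin X U" and "openin X U"
    and "x \<in> topspace X" and "y \<in> topspace X"
  shows "PS X T p x U = {} \<longleftrightarrow> PS X T p y U = {}"
proof -
  have T: "homeomorphic_map X X T"
    and dense: "\<And>z. z \<in> topspace X \<Longrightarrow> X closure_of {zpow X T n z | n. True} = topspace X"
    using assms(1) by (auto simp: minimal_cantor_system_def)
  show ?thesis
    using PS_nonempty_of_dense_orbit[OF T assms(3,2) dense[OF assms(5)] assms(5,6)]
      PS_nonempty_of_dense_orbit[OF T assms(3,2) dense[OF assms(6)] assms(6,5)]
    by blast
qed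

end
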